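(* Let $S$ be a three-level system with Hamiltonian $H_S=\sum_{i=0}^2E_i|i\rangle\langle i|$ where $E_2-E_1=E_1-E_0=\Delta E>0$. Let $\rho$ be a state with $\langle1|\rho|2\rangle=0$, and let $\mathcal{T}$ be any Thermal Operation on $S$. Then $$|\langle1|\mathcal{T}(\rho)|2\rangle|\le e^{-\beta\Delta E}\,|\langle0|\rho|1\rangle|.$$
   Context: $\beta>0$. A Thermal Operation on $S$ is a channel $\mathcal{T}(\rho)=\mathrm{tr}_B[U(\rho\otimes\gamma_B)U^\dagger]$ with $B$ any finite-dimensional system, $H_B$ any Hamiltonian, $\gamma_B=e^{-\beta H_B}/\mathrm{tr}\,e^{-\beta H_B}$, and $U$ unitary with $[U,H_S\otimes\mathbb{I}+\mathbb{I}\otimes H_B]=0$. *)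

theory Defs
  imports Complex_Main "Jordan_Normal_Form.Matrix" "Jordan_Normal_Form.Schur_Decomposition"
begin

definition mtrace :: "complex mat \<Rightarrow> complex" where
  "mtrace A = (\<Sum>i<dim_row A. A $$ (i,i))"

definition hermitian_mat :: "nat \<Rightarrow> complex mat \<Rightarrow> bool" where
  "hermitian_mat n A \<longleftrightarrow> A \<in> carrier_mat n n \<and> mat_adjoint A = A"

definition unitary_mat :: "nat \<Rightarrow> complex mat \<Rightarrow> bool" where
  "unitary_mat n U \<longleftrightarrow> U \<in> carrier_mat n n \<and>
     mat_adjoint U * U = 1\<^sub>m n \<and> U * mat_adjoint U = 1\<^sub>m n"

definition psd_mat :: "nat \<Rightarrow> complex mat \<Rightarrow> bool" where
  "psd_mat n A \<longleftrightarrow> A \<in> carrier_mat n n \<and>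
     (\<forall>v \<in> carrier_vec n. (A *\<^sub>v v) \<bullet>c v \<in> \<real> \<and> 0 \<le> Re ((A *\<^sub>v v) \<bullet>c v))"

definition density_mat :: "nat \<Rightarrow> complex mat \<Rightarrow> bool" where
  "density_mat n \<rho> \<longleftrightarrow> psd_mat n \<rho> \<and> hermitian_mat n \<rho> \<and> mtrace \<rho> = 1"

(* Kronecker (tensor) product; basis index of |i>|j> is i * dim_B + j *)
definition kron :: "complex mat \<Rightarrow> complex mat \<Rightarrow> complex mat" where
  "kron A B = Matrix.mat (dim_row A * dim_row B) (dim_col A * dim_col B)
     (\<lambda>(i,j). A $$ (i div dim_row B, j div dim_col B) * B $$ (i mod dim_row B, j mod dim_col B))"

definition ptrace2 :: "nat \<Rightarrow> complex mat \<Rightarrow> complex mat" where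
  "ptrace2 dB M = Matrix.mat (dim_row M div dB) (dim_col M div dB)
     (\<lambda>(i,k). \<Sum>j<dB. M $$ (i * dB + j, k * dB + j))"

(* exp(-beta H) for Hermitian H, via the spectral theorem / functional calculus:
   H = V diag(d) V^dagger with V unitary and d real, exp(-beta H) = V diag(exp(-beta d)) V^dagger.
   (This is independent of the chosen decomposition.) *)
definition is_exp_neg_beta :: "real \<Rightarrow> nat \<Rightarrow> complex mat \<Rightarrow> complex mat \<Rightarrow> bool" where
  "is_exp_neg_beta \<beta> n H E \<longleftrightarrow>
     (\<exists>V d. unitary_mat n V \<and>
        H = V * mat_diag n (\<lambda>i. complex_of_real (d i)) * mat_adjoint V \<and>
        E = V * mat_diag n (\<lambda>i. complex_of_real (exp (- \<beta> * d i))) * mat_adjoint V)"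

definition is_gibbs_state :: "real \<Rightarrow> nat \<Rightarrow> complex mat \<Rightarrow> complex mat \<Rightarrow> bool" where
  "is_gibbs_state \<beta> n H \<gamma> \<longleftrightarrow>
     (\<exists>E. is_exp_neg_beta \<beta> n H E \<and> \<gamma> = (1 / mtrace E) \<cdot>\<^sub>m E)"

definition thermal_operation ::
  "real \<Rightarrow> nat \<Rightarrow> complex mat \<Rightarrow> (complex mat \<Rightarrow> complex mat) \<Rightarrow> bool" where
  "thermal_operation \<beta> n HS T \<longleftrightarrow>
     (\<exists>dB HB \<gamma> U. 0 < dB \<and> hermitian_mat dB HB \<and> is_gibbs_state \<beta> dB HB \<gamma> \<and>
        unitary_mat (n * dB) U \<and>
        U * (kron HS (1\<^sub>m dB) + kron (1\<^sub>m n) HB) = (kron HS (1\<^sub>m dB) + kron (1\<^sub>m n) HB) * U \<and>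
        (\<forall>\<rho> \<in> carrier_mat n n. T \<rho> = ptrace2 dB (U * kron \<rho> \<gamma> * mat_adjoint U)))"

end

theory Submission
  imports Defs
begin

text \<open>Conjugating with \<open>1 \<otimes> V\<close>, where \<open>V\<close> diagonalises \<open>H\<^sub>B\<close>, leaves the partial trace unchanged and
  turns the bath Gibbs state into \<open>diag g\<close> and the total Hamiltonian into a diagonal matrix. The
  conjugated unitary commutes with the latter, so its nonzero entries connect states of equal total
  energy. Consequently \<open>\<langle>1|\<T>(\<rho>)|2\<rangle>\<close> is fed only by \<open>\<langle>0|\<rho>|1\<rangle>\<close> and by \<open>\<langle>1|\<rho>|2\<rangle> = 0\<close>, the former through
  bath transitions \<open>j \<rightarrow> b\<close> raising the bath energy by \<open>\<Delta>E\<close>, for which \<open>g b = exp (- \<beta> \<Delta>E) g j\<close>.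
  Bounding products of unitary entries by \<open>|u v| \<le> (|u|\<^sup>2 + |v|\<^sup>2) / 2\<close> and using unit row norms
  and \<open>\<Sum> g = 1\<close> gives the claim.\<close>

section \<open>Adjoints and traces\<close>

lemma mat_adjoint_carrier[simp]: "mat_adjoint A \<in> carrier_mat (dim_col A) (dim_row A)"
  unfolding mat_adjoint_def by auto

lemma dim_mat_adjoint[simp]:
  "dim_row (mat_adjoint A) = dim_col A" "dim_col (mat_adjoint A) = dim_row A"
  unfolding mat_adjoint_def by auto

lemma index_mat_adjoint[simp]:
  "i < dim_col A \<Longrightarrow> j < dim_row A \<Longrightarrow> mat_adjoint A $$ (i,j) = cnj (A $$ (j,i))"
  unfolding mat_adjoint_def by (simp add: mat_of_rows_index)

lemma mat_adjoint_adjoint[simp]: "mat_adjoint (mat_adjoint A) = (A :: complex mat)"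
  by (rule eq_matI) auto

lemma mat_adjoint_one[simp]: "mat_adjoint (1\<^sub>m n :: complex mat) = 1\<^sub>m n"
  by (rule eq_matI) auto

lemma index_mult_mat_sum:
  "A \<in> carrier_mat n k \<Longrightarrow> B \<in> carrier_mat k l \<Longrightarrow> i < n \<Longrightarrow> j < l \<Longrightarrow>
    (A * B) $$ (i,j) = (\<Sum>r<k. A $$ (i,r) * B $$ (r,j))"
  by (auto simp: scalar_prod_def atLeast0LessThan intro!: sum.cong)

lemma mat_adjoint_mult:
  fixes A B :: "complex mat"
  assumes "A \<in> carrier_mat p q" "B \<in> carrier_mat q r"
  shows "mat_adjoint (A * B) = mat_adjoint B * mat_adjoint A"
proof (rule eq_matI)
  fix i j assume "i < dim_row (mat_adjoint B * mat_adjoint A)" "j < dim_col (mat_adjoint B * mat_adjoint A)"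
  then have i: "i < r" and j: "j < p" using assms by auto
  have "mat_adjoint (A * B) $$ (i,j) = cnj (\<Sum>k<q. A $$ (j,k) * B $$ (k,i))"
    using assms i j by (simp add: index_mult_mat_sum del: index_mult_mat(1))
  also have "\<dots> = (\<Sum>k<q. mat_adjoint B $$ (i,k) * mat_adjoint A $$ (k,j))"
    using assms i j by (auto simp: mult.commute intro!: sum.cong)
  also have "\<dots> = (mat_adjoint B * mat_adjoint A) $$ (i,j)"
    using assms i j
    by (subst index_mult_mat_sum[of _ r q _ p]) (auto simp del: index_mult_mat(1))
  finally show "mat_adjoint (A * B) $$ (i,j) = (mat_adjoint B * mat_adjoint A) $$ (i,j)" .
qed (use assms in auto)

lemma mtrace_mult_commute:
  assumes "A \<in> carrier_mat n k" "B \<in> carrier_mat k n"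
  shows "mtrace (A * B) = mtrace (B * A)"
proof -
  have "mtrace (A * B) = (\<Sum>i<n. \<Sum>j<k. A $$ (i,j) * B $$ (j,i))"
    using assms unfolding mtrace_def by (auto simp: index_mult_mat_sum simp del: index_mult_mat(1))
  also have "\<dots> = (\<Sum>j<k. \<Sum>i<n. B $$ (j,i) * A $$ (i,j))"
    by (subst sum.swap) (simp add: mult.commute)
  also have "\<dots> = mtrace (B * A)"
    using assms unfolding mtrace_def by (auto simp: index_mult_mat_sum simp del: index_mult_mat(1))
  finally show ?thesis .
qed

lemma mtrace_mat_diag: "mtrace (mat_diag n f) = (\<Sum>i<n. f i)"
  unfolding mtrace_def mat_diag_def by simp

section \<open>Unitary matrices\<close>

lemma unitary_matD:
  assumes "unitary_mat n U"
  shows "U \<in> carrier_mat n n" "mat_adjoint U \<in> carrier_mat n n"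
    "mat_adjoint U * U = 1\<^sub>m n" "U * mat_adjoint U = 1\<^sub>m n"
  using assms unfolding unitary_mat_def by auto

lemma conj_inverse_cancel:
  fixes W W' X :: "'a :: semiring_1 mat"
  assumes "W \<in> carrier_mat n n" "W' \<in> carrier_mat n n" "W * W' = 1\<^sub>m n" "X \<in> carrier_mat n n"
  shows "W * (W' * X * W) * W' = X"
proof -
  have "W * (W' * X * W) * W' = (W * W') * X * (W * W')"
    using assms(1,2,4) by (simp add: assoc_mult_mat[of _ n n _ n _ n])
  also have "\<dots> = X"
    using assms(3,4) by simp
  finally show ?thesis .
qed

lemma conj_inverse_mult:
  fixes W W' A B :: "'a :: semiring_1 mat"
  assumes "W \<in> carrier_mat n n" "W' \<in> carrier_mat n n" "W * W' = 1\<^sub>m n"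
    and "A \<in> carrier_mat n n" "B \<in> carrier_mat n n"
  shows "W' * (A * B) * W = (W' * A * W) * (W' * B * W)"
proof -
  have "(W' * A * W) * (W' * B * W) = W' * A * (W * W') * B * W"
    using assms(1,2,4,5) by (simp add: assoc_mult_mat[of _ n n _ n _ n])
  then show ?thesis using assms by (simp add: assoc_mult_mat[of _ n n _ n _ n])
qed

lemma conj_inverse_commute:
  fixes W W' U H :: "'a :: semiring_1 mat"
  assumes "W \<in> carrier_mat n n" "W' \<in> carrier_mat n n" "W * W' = 1\<^sub>m n"
    and "U \<in> carrier_mat n n" "H \<in> carrier_mat n n" "U * H = H * U"
  shows "(W' * U * W) * (W' * H * W) = (W' * H * W) * (W' * U * W)"
  using conj_inverse_mult[OF assms(1-3)] assms(4-6) by metis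

lemma mat_adjoint_conj:
  fixes W U :: "complex mat"
  assumes "W \<in> carrier_mat n n" "U \<in> carrier_mat n n"
  shows "mat_adjoint (mat_adjoint W * U * W) = mat_adjoint W * mat_adjoint U * W"
proof -
  have Wa: "mat_adjoint W \<in> carrier_mat n n" using assms(1) by auto
  then have "mat_adjoint W * U \<in> carrier_mat n n" using assms(2) by auto
  then have "mat_adjoint (mat_adjoint W * U * W) = mat_adjoint W * (mat_adjoint U * W)"
    using mat_adjoint_mult[OF _ assms(1)] mat_adjoint_mult[OF Wa assms(2)] by simp
  also have "\<dots> = mat_adjoint W * mat_adjoint U * W"
    using Wa assms mat_adjoint_carrier[of U] by (simp add: assoc_mult_mat[of _ n n _ n _ n])
  finally show ?thesis .
qed

lemma unitary_conj:
  assumes "unitary_mat n W" "unitary_mat n U"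
  shows "unitary_mat n (mat_adjoint W * U * W)"
proof -
  note W = unitary_matD[OF assms(1)] and U = unitary_matD[OF assms(2)]
  have "mat_adjoint (mat_adjoint W * U * W) * (mat_adjoint W * U * W) = mat_adjoint W * (mat_adjoint U * U) * W"
    "(mat_adjoint W * U * W) * mat_adjoint (mat_adjoint W * U * W) = mat_adjoint W * (U * mat_adjoint U) * W"
    by (simp_all only: mat_adjoint_conj[OF W(1) U(1)] conj_inverse_mult[OF W(1,2,4)] U(1,2))
  then show ?thesis
    unfolding unitary_mat_def using U(3,4) W W(1)[THEN carrier_matD(1)] U(1) by auto
qed

lemma unitary_row_norm:
  assumes "unitary_mat n U" "x < n"
  shows "(\<Sum>y<n. (cmod (U $$ (x,y)))\<^sup>2) = 1"
proof -
  note U = unitary_matD[OF assms(1)]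
  have "complex_of_real (\<Sum>y<n. (cmod (U $$ (x,y)))\<^sup>2) = (\<Sum>y<n. U $$ (x,y) * mat_adjoint U $$ (y,x))"
    using U(1) assms(2) by (auto simp: complex_norm_square[symmetric] intro!: sum.cong)
  also have "\<dots> = (U * mat_adjoint U) $$ (x,x)"
    using U(1,2) assms(2) by (simp add: index_mult_mat_sum del: index_mult_mat(1))
  also have "\<dots> = 1" using U(4) assms(2) by simp
  finally show ?thesis by (metis of_real_eq_1_iff)
qed

lemma unitary_col_orthonormal:
  assumes "unitary_mat n U" "b < n" "b' < n"
  shows "(\<Sum>j<n. cnj (U $$ (j,b')) * U $$ (j,b)) = (if b' = b then 1 else 0)"
proof -
  note U = unitary_matD[OF assms(1)]
  have "(\<Sum>j<n. cnj (U $$ (j,b')) * U $$ (j,b)) = (mat_adjoint U * U) $$ (b',b)"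
    using U(1,2) assms(2,3) by (simp add: index_mult_mat_sum[of _ n n _ n] del: index_mult_mat(1))
  then show ?thesis using U(3) assms(2,3) by simp
qed

lemma commute_mat_diag_entry:
  fixes U :: "'a :: idom mat"
  assumes "U \<in> carrier_mat n n" "U * mat_diag n f = mat_diag n f * U"
    and "x < n" "y < n" "U $$ (x,y) \<noteq> 0"
  shows "f x = f y"
proof -
  have "U $$ (x,y) * f y = (U * mat_diag n f) $$ (x,y)"
    using assms by (subst mat_diag_mult_right) auto
  also have "\<dots> = (mat_diag n f * U) $$ (x,y)" using assms(2) by simp
  also have "\<dots> = U $$ (x,y) * f x"
    using assms by (subst mat_diag_mult_left) (auto simp: mult.commute)
  finally show ?thesis using assms(5) by simp
qed

section \<open>Kronecker products and the partial trace\<close>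

lemma sum_lessThan_mult_nat:
  fixes n m :: nat
  shows "(\<Sum>i<n * m. f i) = (\<Sum>a<n. \<Sum>b<m. f (a * m + b))"
proof (induction n)
  case (Suc n)
  have "(\<Sum>i<Suc n * m. f i) = (\<Sum>i<n * m. f i) + (\<Sum>i=n*m..<n*m+m. f i)"
    by (metis add.commute atLeast0LessThan le_add1 mult_Suc sum.atLeastLessThan_concat zero_le)
  also have "(\<Sum>i=n*m..<n*m+m. f i) = (\<Sum>b<m. f (n * m + b))"
    using sum.shift_bounds_nat_ivl[of f 0 "n*m" m] by (simp add: lessThan_atLeast0 add.commute)
  finally show ?case using Suc by simp
qed simp

lemma mult_add_less_mult:
  fixes a b n m :: nat
  shows "a < n \<Longrightarrow> b < m \<Longrightarrow> a * m + b < n * m"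
  by (metis add.commute add_less_mono1 less_le_trans mult.commute mult_Suc_right mult_le_mono2 Suc_leI nat_add_left_cancel_less)

lemma dim_kron[simp]:
  "dim_row (kron A B) = dim_row A * dim_row B" "dim_col (kron A B) = dim_col A * dim_col B"
  unfolding kron_def by auto

lemma index_kron:
  "i < dim_row A * dim_row B \<Longrightarrow> j < dim_col A * dim_col B \<Longrightarrow>
    kron A B $$ (i,j) = A $$ (i div dim_row B, j div dim_col B) * B $$ (i mod dim_row B, j mod dim_col B)"
  unfolding kron_def by simp

lemma index_kron_block:
  assumes "A \<in> carrier_mat n n'" "B \<in> carrier_mat m m'"
    and "a < n" "a' < n'" "b < m" "b' < m'"
  shows "kron A B $$ (a * m + b, a' * m' + b') = A $$ (a,a') * B $$ (b,b')"
  using assms by (simp add: index_kron mult_add_less_mult)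

lemma kron_carrier: "A \<in> carrier_mat n n' \<Longrightarrow> B \<in> carrier_mat m m' \<Longrightarrow> kron A B \<in> carrier_mat (n * m) (n' * m')"
  by auto

lemma kron_mult:
  assumes A: "A \<in> carrier_mat p q" and B: "B \<in> carrier_mat r s"
    and C: "C \<in> carrier_mat q t" and D: "D \<in> carrier_mat s u"
  shows "kron A B * kron C D = kron (A * C) (B * D)"
proof (rule eq_matI)
  fix i j assume "i < dim_row (kron (A * C) (B * D))" "j < dim_col (kron (A * C) (B * D))"
  then have i: "i < p * r" and j: "j < t * u" using A B C D by auto
  then have "0 < r" "0 < u" by (auto intro!: Nat.gr0I)
  then have ij: "i div r < p" "i mod r < r" "j div u < t" "j mod u < u"
    using i j by (auto simp: less_mult_imp_div_less mult.commute)
  have "(kron A B * kron C D) $$ (i,j) = (\<Sum>k<q * s. kron A B $$ (i,k) * kron C D $$ (k,j))"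
    using i j A B C D by (subst index_mult_mat_sum[of _ "p * r" "q * s" _ "t * u"]) auto
  also have "\<dots> = (\<Sum>a<q. \<Sum>b<s. (A $$ (i div r, a) * C $$ (a, j div u)) * (B $$ (i mod r, b) * D $$ (b, j mod u)))"
    unfolding sum_lessThan_mult_nat
    using A B C D i j by (intro sum.cong refl) (simp add: index_kron mult_add_less_mult)
  also have "\<dots> = (A * C) $$ (i div r, j div u) * (B * D) $$ (i mod r, j mod u)"
    using A B C D ij by (simp add: index_mult_mat_sum[of _ p q _ t] index_mult_mat_sum[of _ r s _ u]
        sum_product mult_ac del: index_mult_mat(1))
  also have "\<dots> = kron (A * C) (B * D) $$ (i,j)"
    using A B C D i j by (simp add: index_kron)
  finally show "(kron A B * kron C D) $$ (i,j) = kron (A * C) (B * D) $$ (i,j)" .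
qed (use A B C D in auto)

lemma kron_one_conj:
  assumes "A \<in> carrier_mat n n" "P \<in> carrier_mat m k" "B \<in> carrier_mat k l" "Q \<in> carrier_mat l m'"
  shows "kron (1\<^sub>m n) P * kron A B * kron (1\<^sub>m n) Q = kron A (P * B * Q)"
  using assms by (simp add: kron_mult[of _ n n _ m k _ n _ l] kron_mult[of _ n n _ m l _ n _ m'])

lemma mat_adjoint_kron: "mat_adjoint (kron A B) = kron (mat_adjoint A) (mat_adjoint B)"
proof (rule eq_matI)
  fix i j assume i: "i < dim_row (kron (mat_adjoint A) (mat_adjoint B))"
    and j: "j < dim_col (kron (mat_adjoint A) (mat_adjoint B))"
  then have "0 < dim_col B" "0 < dim_row B" by (auto intro!: Nat.gr0I)
  then have "i div dim_col B < dim_col A" "j div dim_row B < dim_row A"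
    "i mod dim_col B < dim_col B" "j mod dim_row B < dim_row B"
    using i j by (auto simp: less_mult_imp_div_less)
  then show "mat_adjoint (kron A B) $$ (i, j) = kron (mat_adjoint A) (mat_adjoint B) $$ (i, j)"
    using i j by (simp add: index_kron)
qed auto

lemma kron_one_one: "kron (1\<^sub>m n) (1\<^sub>m m) = (1\<^sub>m (n * m) :: complex mat)"
proof (rule eq_matI)
  fix i j assume "i < dim_row (1\<^sub>m (n * m) :: complex mat)" "j < dim_col (1\<^sub>m (n * m) :: complex mat)"
  then have i: "i < n * m" and j: "j < n * m" by auto
  then have "0 < m" by (auto intro!: Nat.gr0I)
  then have "i div m < n" "j div m < n" "i mod m < m" "j mod m < m"
    using i j by (auto simp: less_mult_imp_div_less)
  moreover have "(i div m = j div m \<and> i mod m = j mod m) = (i = j)"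
    by (metis div_mult_mod_eq)
  ultimately show "kron (1\<^sub>m n) (1\<^sub>m m) $$ (i, j) = (1\<^sub>m (n * m) :: complex mat) $$ (i, j)"
    using i j by (auto simp: index_kron)
qed auto

lemma dim_mat_diag[simp]: "dim_row (mat_diag n f) = n" "dim_col (mat_diag n f) = n"
  unfolding mat_diag_def by auto

lemma kron_mat_diag_add:
  "kron (mat_diag n f) (1\<^sub>m m) + kron (1\<^sub>m n) (mat_diag m g)
     = mat_diag (n * m) (\<lambda>x. f (x div m) + g (x mod m) :: complex)"
proof (rule eq_matI)
  fix x y assume "x < dim_row (mat_diag (n * m) (\<lambda>x. f (x div m) + g (x mod m)))"
    "y < dim_col (mat_diag (n * m) (\<lambda>x. f (x div m) + g (x mod m)))"
  then have x: "x < n * m" and y: "y < n * m" by auto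
  then have "0 < m" by (auto intro!: Nat.gr0I)
  then have "x div m < n" "y div m < n" "x mod m < m" "y mod m < m"
    using x y by (auto simp: less_mult_imp_div_less)
  moreover have "(x div m = y div m \<and> x mod m = y mod m) = (x = y)"
    by (metis div_mult_mod_eq)
  ultimately show "(kron (mat_diag n f) (1\<^sub>m m) + kron (1\<^sub>m n) (mat_diag m g)) $$ (x,y)
      = mat_diag (n * m) (\<lambda>x. f (x div m) + g (x mod m)) $$ (x,y)"
    using x y by (auto simp: index_kron mat_diag_def)
qed (auto simp: mat_diag_def)

lemma unitary_kron_one:
  assumes "unitary_mat m V"
  shows "unitary_mat (n * m) (kron (1\<^sub>m n) V)"
proof -
  note V = unitary_matD[OF assms]
  have "kron (1\<^sub>m n) (mat_adjoint V) * kron (1\<^sub>m n) V = kron (1\<^sub>m n * 1\<^sub>m n) (mat_adjoint V * V)"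
    "kron (1\<^sub>m n) V * kron (1\<^sub>m n) (mat_adjoint V) = kron (1\<^sub>m n * 1\<^sub>m n) (V * mat_adjoint V)"
    by (rule kron_mult[OF one_carrier_mat V(2) one_carrier_mat V(1)],
        rule kron_mult[OF one_carrier_mat V(1) one_carrier_mat V(2)])
  then show ?thesis
    unfolding unitary_mat_def mat_adjoint_kron mat_adjoint_one
    using V(3,4) kron_carrier[OF one_carrier_mat V(1)] by (simp add: kron_one_one)
qed

lemma dim_ptrace2[simp]:
  "dim_row (ptrace2 m M) = dim_row M div m" "dim_col (ptrace2 m M) = dim_col M div m"
  unfolding ptrace2_def by auto

lemma index_ptrace2:
  "i < dim_row M div m \<Longrightarrow> k < dim_col M div m \<Longrightarrow>
    ptrace2 m M $$ (i,k) = (\<Sum>j<m. M $$ (i * m + j, k * m + j))"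
  unfolding ptrace2_def by simp

lemma index_kron_one_mult:
  assumes "V \<in> carrier_mat m m" "M \<in> carrier_mat (n * m) c" "a < n" "j < m" "y < c"
  shows "(kron (1\<^sub>m n) V * M) $$ (a * m + j, y) = (\<Sum>b<m. V $$ (j,b) * M $$ (a * m + b, y))"
proof -
  have "(kron (1\<^sub>m n) V * M) $$ (a * m + j, y)
      = (\<Sum>a'<n. \<Sum>b<m. kron (1\<^sub>m n) V $$ (a * m + j, a' * m + b) * M $$ (a' * m + b, y))"
    using assms kron_carrier[OF one_carrier_mat[of n] assms(1)]
    by (simp add: index_mult_mat_sum[of _ "n * m" "n * m" _ c] mult_add_less_mult sum_lessThan_mult_nat
        del: index_mult_mat(1))
  also have "\<dots> = (\<Sum>a'<n. \<Sum>b<m. if a = a' then V $$ (j,b) * M $$ (a' * m + b, y) else 0)"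
    using assms by (intro sum.cong refl) (simp add: index_kron_block[OF one_carrier_mat[of n] assms(1)])
  finally show ?thesis using assms(3) by (simp add: sum.swap[of _ "{..<m}"])
qed

lemma index_mult_kron_one:
  assumes "V \<in> carrier_mat m m" "M \<in> carrier_mat r (n * m)" "a < n" "j < m" "x < r"
  shows "(M * kron (1\<^sub>m n) V) $$ (x, a * m + j) = (\<Sum>b<m. M $$ (x, a * m + b) * V $$ (b,j))"
proof -
  have "(M * kron (1\<^sub>m n) V) $$ (x, a * m + j)
      = (\<Sum>a'<n. \<Sum>b<m. M $$ (x, a' * m + b) * kron (1\<^sub>m n) V $$ (a' * m + b, a * m + j))"
    using assms kron_carrier[OF one_carrier_mat[of n] assms(1)]
    by (simp add: index_mult_mat_sum[of _ r "n * m" _ "n * m"] mult_add_less_mult sum_lessThan_mult_nat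
        del: index_mult_mat(1))
  also have "\<dots> = (\<Sum>a'<n. \<Sum>b<m. if a = a' then M $$ (x, a' * m + b) * V $$ (b,j) else 0)"
    using assms by (intro sum.cong refl) (simp add: index_kron_block[OF one_carrier_mat[of n] assms(1)])
  finally show ?thesis using assms(3) by (simp add: sum.swap[of _ "{..<m}"])
qed

lemma ptrace2_kron_one_conj:
  assumes "unitary_mat m V" "M \<in> carrier_mat (n * m) (n * m)"
  shows "ptrace2 m (kron (1\<^sub>m n) V * M * kron (1\<^sub>m n) (mat_adjoint V)) = ptrace2 m M"
proof (rule eq_matI)
  note V = unitary_matD[OF assms(1)]
  have VM: "kron (1\<^sub>m n) V * M \<in> carrier_mat (n * m) (n * m)"
    using kron_carrier[OF one_carrier_mat[of n] V(1)] assms(2) by auto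
  show dims: "dim_row (ptrace2 m (kron (1\<^sub>m n) V * M * kron (1\<^sub>m n) (mat_adjoint V))) = dim_row (ptrace2 m M)"
    "dim_col (ptrace2 m (kron (1\<^sub>m n) V * M * kron (1\<^sub>m n) (mat_adjoint V))) = dim_col (ptrace2 m M)"
    using assms(2) V(1,2) by auto
  fix i k assume "i < dim_row (ptrace2 m M)" "k < dim_col (ptrace2 m M)"
  then have i: "i < n" and k: "k < n" and m: "0 < m" using assms(2) by (auto split: if_splits)
  have "ptrace2 m (kron (1\<^sub>m n) V * M * kron (1\<^sub>m n) (mat_adjoint V)) $$ (i,k)
      = (\<Sum>j<m. (kron (1\<^sub>m n) V * M * kron (1\<^sub>m n) (mat_adjoint V)) $$ (i * m + j, k * m + j))"
    using i k m V(1,2) assms(2) by (simp add: index_ptrace2)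
  also have "\<dots> = (\<Sum>j<m. \<Sum>b'<m. (\<Sum>b<m. V $$ (j,b) * M $$ (i * m + b, k * m + b')) * cnj (V $$ (j,b')))"
    using V(1,2) assms(2) i k
    by (intro sum.cong refl) (simp add: index_mult_kron_one[OF V(2) VM k] index_kron_one_mult[OF V(1) assms(2) i]
        mult_add_less_mult del: index_mult_mat(1))
  also have "\<dots> = (\<Sum>j<m. \<Sum>b'<m. \<Sum>b<m. V $$ (j,b) * M $$ (i * m + b, k * m + b') * cnj (V $$ (j,b')))"
    by (simp only: sum_distrib_right)
  also have "\<dots> = (\<Sum>b'<m. \<Sum>j<m. \<Sum>b<m. V $$ (j,b) * M $$ (i * m + b, k * m + b') * cnj (V $$ (j,b')))"
    by (rule sum.swap)
  also have "\<dots> = (\<Sum>b'<m. \<Sum>b<m. M $$ (i * m + b, k * m + b') * (\<Sum>j<m. cnj (V $$ (j,b')) * V $$ (j,b)))"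
    by (rule sum.cong[OF refl], subst sum.swap) (simp add: sum_distrib_left mult_ac)
  also have "\<dots> = (\<Sum>b'<m. \<Sum>b<m. if b' = b then M $$ (i * m + b, k * m + b') else 0)"
    by (intro sum.cong refl) (simp add: unitary_col_orthonormal[OF assms(1)])
  also have "\<dots> = (\<Sum>j<m. M $$ (i * m + j, k * m + j))"
    by simp
  also have "\<dots> = ptrace2 m M $$ (i,k)"
    using i k m assms(2) by (simp add: index_ptrace2)
  finally show "ptrace2 m (kron (1\<^sub>m n) V * M * kron (1\<^sub>m n) (mat_adjoint V)) $$ (i,k) = ptrace2 m M $$ (i,k)" .
qed

lemma index_conj_kron_mat_diag:
  assumes U: "U \<in> carrier_mat (n * m) (n * m)" and rho: "\<rho> \<in> carrier_mat n n"
    and "x < n * m" "z < n * m"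
  shows "(U * kron \<rho> (mat_diag m g) * mat_adjoint U) $$ (x,z) =
    (\<Sum>a<n. \<Sum>a'<n. \<Sum>b<m. U $$ (x, a * m + b) * \<rho> $$ (a,a') * g b * cnj (U $$ (z, a' * m + b)))"
proof -
  let ?Y = "kron \<rho> (mat_diag m g)"
  have Y: "?Y \<in> carrier_mat (n * m) (n * m)" using kron_carrier[OF rho mat_diag_dim] .
  have UY: "U * ?Y \<in> carrier_mat (n * m) (n * m)" using U Y by auto
  have Ua: "mat_adjoint U \<in> carrier_mat (n * m) (n * m)" using U by auto
  have entry: "(U * ?Y) $$ (x, a' * m + b) = (\<Sum>a<n. U $$ (x, a * m + b) * \<rho> $$ (a,a') * g b)"
    if "a' < n" "b < m" for a' b
  proof -
    have "(U * ?Y) $$ (x, a' * m + b)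
        = (\<Sum>a<n. \<Sum>b'<m. U $$ (x, a * m + b') * (\<rho> $$ (a,a') * mat_diag m g $$ (b',b)))"
      using U Y rho that assms(3)
      by (simp add: index_mult_mat_sum[of _ "n * m" "n * m" _ "n * m"] sum_lessThan_mult_nat
          index_kron_block mult_add_less_mult del: index_mult_mat(1))
    then show ?thesis using that by (simp add: mat_diag_def if_distrib mult_ac cong: if_cong)
  qed
  have "(U * ?Y * mat_adjoint U) $$ (x,z) =
      (\<Sum>a'<n. \<Sum>b<m. (U * ?Y) $$ (x, a' * m + b) * cnj (U $$ (z, a' * m + b)))"
    using U UY Ua assms(3,4)
    by (simp add: index_mult_mat_sum[of _ "n * m" "n * m" _ "n * m"] sum_lessThan_mult_nat
        mult_add_less_mult del: index_mult_mat(1))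
  also have "\<dots> = (\<Sum>a'<n. \<Sum>b<m. \<Sum>a<n. U $$ (x, a * m + b) * \<rho> $$ (a,a') * g b * cnj (U $$ (z, a' * m + b)))"
    using entry by (simp add: sum_distrib_right)
  also have "\<dots> = (\<Sum>a<n. \<Sum>a'<n. \<Sum>b<m. U $$ (x, a * m + b) * \<rho> $$ (a,a') * g b * cnj (U $$ (z, a' * m + b)))"
    by (subst sum.swap) (rule sum.cong[OF refl], rule sum.swap)
  finally show ?thesis .
qed

section \<open>Gibbs states and thermal operations\<close>

definition gibbs_weight :: "real \<Rightarrow> nat \<Rightarrow> (nat \<Rightarrow> real) \<Rightarrow> nat \<Rightarrow> real" where
  "gibbs_weight \<beta> m d b = exp (- \<beta> * d b) / (\<Sum>k<m. exp (- \<beta> * d k))"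

lemma gibbs_weight_nonneg: "0 \<le> gibbs_weight \<beta> m d b"
  unfolding gibbs_weight_def by (simp add: sum_nonneg)

lemma sum_gibbs_weight:
  assumes "0 < m"
  shows "(\<Sum>b<m. gibbs_weight \<beta> m d b) = 1"
proof -
  have "0 < (\<Sum>k<m. exp (- \<beta> * d k))" using assms by (intro sum_pos) auto
  then show ?thesis unfolding gibbs_weight_def by (simp add: sum_divide_distrib[symmetric])
qed

lemma gibbs_weight_shift:
  "d b = d j + \<Delta>E \<Longrightarrow> gibbs_weight \<beta> m d b = exp (- \<beta> * \<Delta>E) * gibbs_weight \<beta> m d j"
  unfolding gibbs_weight_def by (simp add: algebra_simps exp_add[symmetric])

lemma gibbs_state_eigenbasis:
  assumes "is_gibbs_state \<beta> m H \<gamma>"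
  obtains V d where "unitary_mat m V" "\<gamma> \<in> carrier_mat m m"
    "mat_adjoint V * H * V = mat_diag m (\<lambda>i. complex_of_real (d i))"
    "mat_adjoint V * \<gamma> * V = mat_diag m (\<lambda>i. complex_of_real (gibbs_weight \<beta> m d i))"
proof -
  obtain E V d where unitary: "unitary_mat m V"
    and H: "H = V * mat_diag m (\<lambda>i. complex_of_real (d i)) * mat_adjoint V"
    and E: "E = V * mat_diag m (\<lambda>i. complex_of_real (exp (- \<beta> * d i))) * mat_adjoint V"
    and \<gamma>: "\<gamma> = (1 / mtrace E) \<cdot>\<^sub>m E"
    using assms unfolding is_gibbs_state_def is_exp_neg_beta_def by blast
  note V = unitary_matD[OF unitary]
  define D where "D = mat_diag m (\<lambda>i. complex_of_real (exp (- \<beta> * d i)))"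
  have D: "D \<in> carrier_mat m m" unfolding D_def by simp
  have conj_cancel: "mat_adjoint V * (V * X * mat_adjoint V) * V = X" if "X \<in> carrier_mat m m" for X
    using conj_inverse_cancel[OF V(2,1,3) that] .
  have "mtrace E = mtrace (D * mat_adjoint V * V)"
    unfolding E D_def[symmetric] using V(1,2) D
    by (simp add: mtrace_mult_commute[of V m m] assoc_mult_mat[of _ m m _ m _ m])
  also have "\<dots> = (\<Sum>k<m. complex_of_real (exp (- \<beta> * d k)))"
    using V(1,2,3) D by (simp add: assoc_mult_mat[of _ m m _ m _ m] mtrace_mat_diag D_def)
  finally have trace: "mtrace E = complex_of_real (\<Sum>k<m. exp (- \<beta> * d k))" by simp
  have Ec: "E \<in> carrier_mat m m" unfolding E by (meson mult_carrier_mat mat_diag_dim V(1,2))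
  have "mat_adjoint V * \<gamma> * V = (1 / mtrace E) \<cdot>\<^sub>m (mat_adjoint V * E * V)"
    unfolding \<gamma> using V(1,2) Ec
    by (simp add: mult_smult_distrib[of _ m m] mult_smult_assoc_mat[of _ m m])
  also have "\<dots> = mat_diag m (\<lambda>i. complex_of_real (gibbs_weight \<beta> m d i))"
    unfolding trace unfolding E D_def[symmetric] conj_cancel[OF D]
    by (rule eq_matI) (auto simp: D_def mat_diag_def gibbs_weight_def)
  finally have "mat_adjoint V * \<gamma> * V = mat_diag m (\<lambda>i. complex_of_real (gibbs_weight \<beta> m d i))" .
  moreover have "mat_adjoint V * H * V = mat_diag m (\<lambda>i. complex_of_real (d i))"
    unfolding H by (rule conj_cancel) simp
  moreover have "\<gamma> \<in> carrier_mat m m" unfolding \<gamma> using Ec by simp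
  ultimately show ?thesis using that[OF unitary] by blast
qed

lemma total_hamiltonian_eigenbasis:
  assumes "unitary_mat m V" "HB \<in> carrier_mat m m"
    and "mat_adjoint V * HB * V = mat_diag m (\<lambda>i. complex_of_real (d i))"
  shows "mat_adjoint (kron (1\<^sub>m n) V) * (kron (mat_diag n (\<lambda>i. complex_of_real (Es i))) (1\<^sub>m m) + kron (1\<^sub>m n) HB)
      * kron (1\<^sub>m n) V = mat_diag (n * m) (\<lambda>x. complex_of_real (Es (x div m) + d (x mod m)))"
proof -
  let ?HS = "mat_diag n (\<lambda>i. complex_of_real (Es i))" and ?W = "kron (1\<^sub>m n) V"
  note V = unitary_matD[OF assms(1)]
  have W: "?W \<in> carrier_mat (n * m) (n * m)" "mat_adjoint ?W \<in> carrier_mat (n * m) (n * m)"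
    using unitary_matD(1,2)[OF unitary_kron_one[OF assms(1)]] .
  have K: "kron ?HS (1\<^sub>m m) \<in> carrier_mat (n * m) (n * m)" "kron (1\<^sub>m n) HB \<in> carrier_mat (n * m) (n * m)"
    using kron_carrier[OF mat_diag_dim one_carrier_mat[of m]] kron_carrier[OF one_carrier_mat[of n] assms(2)] .
  have "mat_adjoint ?W * (kron ?HS (1\<^sub>m m) + kron (1\<^sub>m n) HB) * ?W
      = mat_adjoint ?W * kron ?HS (1\<^sub>m m) * ?W + mat_adjoint ?W * kron (1\<^sub>m n) HB * ?W"
    using W K
    by (simp add: mult_add_distrib_mat[of _ "n * m" "n * m"] add_mult_distrib_mat[of _ "n * m" "n * m"])
  also have "\<dots> = kron ?HS (1\<^sub>m m) + kron (1\<^sub>m n) (mat_diag m (\<lambda>i. complex_of_real (d i)))"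
    unfolding mat_adjoint_kron mat_adjoint_one using assms(2,3) V(1,2,3)
    by (simp add: kron_one_conj[of _ n _ m m _ m _ m])
  also have "\<dots> = mat_diag (n * m) (\<lambda>x. complex_of_real (Es (x div m) + d (x mod m)))"
    unfolding kron_mat_diag_add by simp
  finally show ?thesis .
qed

lemma ptrace2_conj_bath_basis:
  assumes "unitary_mat m V" "U \<in> carrier_mat (n * m) (n * m)" "X \<in> carrier_mat (n * m) (n * m)"
  defines "W \<equiv> kron (1\<^sub>m n) V"
  shows "ptrace2 m (U * X * mat_adjoint U)
    = ptrace2 m ((mat_adjoint W * U * W) * (mat_adjoint W * X * W) * mat_adjoint (mat_adjoint W * U * W))"
proof -
  note W = unitary_matD[OF unitary_kron_one[OF assms(1), of n, folded W_def]]
  have UX: "U * X \<in> carrier_mat (n * m) (n * m)" "mat_adjoint U \<in> carrier_mat (n * m) (n * m)"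
    using assms(2,3) by auto
  define M where "M = U * X * mat_adjoint U"
  have M: "M \<in> carrier_mat (n * m) (n * m)" unfolding M_def using UX by auto
  then have M': "mat_adjoint W * M * W \<in> carrier_mat (n * m) (n * m)" using W(1,2) by auto
  have "ptrace2 m M = ptrace2 m (W * (mat_adjoint W * M * W) * mat_adjoint W)"
    unfolding conj_inverse_cancel[OF W(1,2,4) M] ..
  also have "\<dots> = ptrace2 m (mat_adjoint W * M * W)"
    using ptrace2_kron_one_conj[OF assms(1) M'[unfolded W_def]]
    unfolding W_def mat_adjoint_kron mat_adjoint_one .
  also have "mat_adjoint W * M * W
      = (mat_adjoint W * U * W) * (mat_adjoint W * X * W) * mat_adjoint (mat_adjoint W * U * W)"
    unfolding M_def mat_adjoint_conj[OF W(1) assms(2)]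
    using conj_inverse_mult[OF W(1,2,4) UX] conj_inverse_mult[OF W(1,2,4) assms(2,3)] by simp
  finally show ?thesis unfolding M_def .
qed

text \<open>The unitary \<open>U\<close> below is the unitary of the thermal operation written in an eigenbasis
  of the bath Hamiltonian, in which the bath Gibbs state is diagonal.\<close>

lemma thermal_operation_eigenbasis:
  assumes "thermal_operation \<beta> n (mat_diag n (\<lambda>i. complex_of_real (Es i))) T"
  obtains m U d where "0 < m" "unitary_mat (n * m) U"
    "\<And>x y. x < n * m \<Longrightarrow> y < n * m \<Longrightarrow> U $$ (x,y) \<noteq> 0 \<Longrightarrow>
       Es (x div m) + d (x mod m) = Es (y div m) + d (y mod m)"
    "\<And>\<rho>. \<rho> \<in> carrier_mat n n \<Longrightarrow>
       T \<rho> = ptrace2 m (U * kron \<rho> (mat_diag m (\<lambda>b. complex_of_real (gibbs_weight \<beta> m d b))) * mat_adjoint U)"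
proof -
  let ?HS = "mat_diag n (\<lambda>i. complex_of_real (Es i))"
  obtain m HB \<gamma> U0 where m: "0 < m" and HB: "hermitian_mat m HB" and gibbs: "is_gibbs_state \<beta> m HB \<gamma>"
    and U0: "unitary_mat (n * m) U0"
    and comm: "U0 * (kron ?HS (1\<^sub>m m) + kron (1\<^sub>m n) HB) = (kron ?HS (1\<^sub>m m) + kron (1\<^sub>m n) HB) * U0"
    and T: "\<And>\<rho>. \<rho> \<in> carrier_mat n n \<Longrightarrow> T \<rho> = ptrace2 m (U0 * kron \<rho> \<gamma> * mat_adjoint U0)"
    using assms unfolding thermal_operation_def by blast
  have HBc: "HB \<in> carrier_mat m m" using HB unfolding hermitian_mat_def by simp
  obtain V d where V: "unitary_mat m V" and \<gamma>: "\<gamma> \<in> carrier_mat m m"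
    and HB_diag: "mat_adjoint V * HB * V = mat_diag m (\<lambda>i. complex_of_real (d i))"
    and \<gamma>_diag: "mat_adjoint V * \<gamma> * V = mat_diag m (\<lambda>i. complex_of_real (gibbs_weight \<beta> m d i))"
    using gibbs_state_eigenbasis[OF gibbs] by blast
  define W where "W = kron (1\<^sub>m n) V"
  define U where "U = mat_adjoint W * U0 * W"
  note Wm = unitary_matD[OF unitary_kron_one[OF V, of n, folded W_def]]
  have U: "unitary_mat (n * m) U"
    unfolding U_def using unitary_conj[OF unitary_kron_one[OF V, of n, folded W_def] U0] .
  have "(kron ?HS (1\<^sub>m m) + kron (1\<^sub>m n) HB) \<in> carrier_mat (n * m) (n * m)"
    using kron_carrier[OF mat_diag_dim one_carrier_mat[of m]] kron_carrier[OF one_carrier_mat[of n] HBc] by simp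
  from conj_inverse_commute[OF Wm(1,2,4) unitary_matD(1)[OF U0] this comm]
  have "U * mat_diag (n * m) (\<lambda>x. complex_of_real (Es (x div m) + d (x mod m)))
      = mat_diag (n * m) (\<lambda>x. complex_of_real (Es (x div m) + d (x mod m))) * U"
    unfolding U_def W_def total_hamiltonian_eigenbasis[OF V HBc HB_diag] .
  from commute_mat_diag_entry[OF unitary_matD(1)[OF U] this]
  have energy: "Es (x div m) + d (x mod m) = Es (y div m) + d (y mod m)"
    if "x < n * m" "y < n * m" "U $$ (x,y) \<noteq> 0" for x y
    using that of_real_eq_iff by (metis of_real_add)
  have "T \<rho> = ptrace2 m (U * kron \<rho> (mat_diag m (\<lambda>b. complex_of_real (gibbs_weight \<beta> m d b))) * mat_adjoint U)"
    if \<rho>: "\<rho> \<in> carrier_mat n n" for \<rho>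
  proof -
    have "mat_adjoint W * kron \<rho> \<gamma> * W = kron \<rho> (mat_diag m (\<lambda>b. complex_of_real (gibbs_weight \<beta> m d b)))"
      unfolding W_def mat_adjoint_kron mat_adjoint_one using \<rho> \<gamma> unitary_matD(1,2)[OF V] \<gamma>_diag
      by (simp add: kron_one_conj[of _ n _ m m _ m _ m])
    then show ?thesis
      using T[OF \<rho>] ptrace2_conj_bath_basis[OF V unitary_matD(1)[OF U0] kron_carrier[OF \<rho> \<gamma>]]
      unfolding U_def W_def by simp
  qed
  then show ?thesis using that[OF m U] energy by blast
qed

section \<open>The coherence bound\<close>

lemma index_ptrace2_conj_kron_mat_diag:
  assumes "U \<in> carrier_mat (n * m) (n * m)" "\<rho> \<in> carrier_mat n n" "k < n" "l < n" "0 < m"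
  shows "ptrace2 m (U * kron \<rho> (mat_diag m g) * mat_adjoint U) $$ (k,l) =
    (\<Sum>j<m. \<Sum>a<n. \<Sum>a'<n. \<Sum>b<m.
       U $$ (k * m + j, a * m + b) * \<rho> $$ (a,a') * g b * cnj (U $$ (l * m + j, a' * m + b)))"
proof -
  have "mat_adjoint U \<in> carrier_mat (n * m) (n * m)" using assms(1) by auto
  then have "U * kron \<rho> (mat_diag m g) * mat_adjoint U \<in> carrier_mat (n * m) (n * m)"
    by (meson mult_carrier_mat assms(1) kron_carrier[OF assms(2) mat_diag_dim])
  then show ?thesis
    using assms by (simp add: index_ptrace2 index_conj_kron_mat_diag mult_add_less_mult del: index_mult_mat(1))
qed

lemma block_energy_conservation:
  assumes energy: "\<And>x y. x < n * m \<Longrightarrow> y < n * m \<Longrightarrow> U $$ (x,y) \<noteq> 0 \<Longrightarrow>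
       Es (x div m) + d (x mod m) = Es (y div m) + d (y mod m)"
    and "k < n" "a < n" "j < m" "b < m" "U $$ (k * m + j, a * m + b) \<noteq> 0"
  shows "Es k + d j = Es a + d b"
  using energy[OF mult_add_less_mult[OF assms(2,4)] mult_add_less_mult[OF assms(3,5)] assms(6)] assms(4,5)
  by simp

lemma unitary_block_row_norm_le:
  assumes "unitary_mat (n * m) U" "x < n * m" "a < n"
  shows "(\<Sum>b<m. (cmod (U $$ (x, a * m + b)))\<^sup>2) \<le> 1"
proof -
  have "(\<Sum>b<m. (cmod (U $$ (x, a * m + b)))\<^sup>2) \<le> (\<Sum>a'<n. \<Sum>b<m. (cmod (U $$ (x, a' * m + b)))\<^sup>2)"
    using assms(3) by (intro member_le_sum[where f = "\<lambda>a'. \<Sum>b<m. (cmod (U $$ (x, a' * m + b)))\<^sup>2"])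
      (auto intro: sum_nonneg)
  also have "\<dots> = 1" using unitary_row_norm[OF assms(1,2)] by (simp add: sum_lessThan_mult_nat)
  finally show ?thesis .
qed

text \<open>A transition term is nonzero only if the bath jumps from level \<open>j\<close> to a level \<open>b\<close> higher by
  \<open>\<Delta>E\<close>, whose Gibbs weight is smaller by the factor \<open>exp (- \<beta> * \<Delta>E)\<close>.\<close>

lemma transition_term_bound:
  fixes U :: "complex mat" and Es d :: "nat \<Rightarrow> real" and r v :: complex
  assumes energy: "\<And>x y. x < n * m \<Longrightarrow> y < n * m \<Longrightarrow> U $$ (x,y) \<noteq> 0 \<Longrightarrow>
       Es (x div m) + d (x mod m) = Es (y div m) + d (y mod m)"
    and "p < n" "p' < n" "j < m" "b < m" and gap: "Es p - Es p' = \<Delta>E"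
  shows "cmod (U $$ (p * m + j, p' * m + b) * r * complex_of_real (gibbs_weight \<beta> m d b) * cnj v)
    \<le> cmod r * exp (- \<beta> * \<Delta>E) * gibbs_weight \<beta> m d j * ((cmod (U $$ (p * m + j, p' * m + b)))\<^sup>2 + (cmod v)\<^sup>2) / 2"
proof (cases "U $$ (p * m + j, p' * m + b) = 0")
  case False
  let ?u = "U $$ (p * m + j, p' * m + b)"
  have "Es p + d j = Es p' + d b"
    using block_energy_conservation[of n m U Es d, OF energy assms(2-5) False] .
  then have "gibbs_weight \<beta> m d b = exp (- \<beta> * \<Delta>E) * gibbs_weight \<beta> m d j"
    using gap by (intro gibbs_weight_shift) simp
  then have "cmod (?u * r * complex_of_real (gibbs_weight \<beta> m d b) * cnj v)
      = (cmod r * exp (- \<beta> * \<Delta>E) * gibbs_weight \<beta> m d j) * (cmod ?u * cmod v)"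
    using gibbs_weight_nonneg[of \<beta> m d j] by (simp add: norm_mult mult_ac)
  also have "\<dots> \<le> (cmod r * exp (- \<beta> * \<Delta>E) * gibbs_weight \<beta> m d j) * (((cmod ?u)\<^sup>2 + (cmod v)\<^sup>2) / 2)"
    using sum_squares_bound[of "cmod ?u" "cmod v"] gibbs_weight_nonneg[of \<beta> m d j]
    by (intro mult_left_mono) auto
  finally show ?thesis by simp
qed (simp add: gibbs_weight_nonneg)

lemma coherence_transfer_bound:
  fixes U :: "complex mat" and Es d :: "nat \<Rightarrow> real" and r :: complex
  assumes U: "unitary_mat (n * m) U" and m: "0 < m"
    and energy: "\<And>x y. x < n * m \<Longrightarrow> y < n * m \<Longrightarrow> U $$ (x,y) \<noteq> 0 \<Longrightarrow>
       Es (x div m) + d (x mod m) = Es (y div m) + d (y mod m)"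
    and idx: "p < n" "p' < n" "q < n" "q' < n" and gap: "Es p - Es p' = \<Delta>E"
  shows "cmod (\<Sum>j<m. \<Sum>b<m. U $$ (p * m + j, p' * m + b) * r * complex_of_real (gibbs_weight \<beta> m d b)
            * cnj (U $$ (q * m + j, q' * m + b))) \<le> exp (- \<beta> * \<Delta>E) * cmod r"
proof -
  let ?e = "exp (- \<beta> * \<Delta>E)" and ?g = "gibbs_weight \<beta> m d"
  let ?u = "\<lambda>j b. U $$ (p * m + j, p' * m + b)" and ?v = "\<lambda>j b. U $$ (q * m + j, q' * m + b)"
  have row: "(\<Sum>b<m. cmod r * ?e * ?g j * ((cmod (?u j b))\<^sup>2 + (cmod (?v j b))\<^sup>2) / 2) \<le> cmod r * ?e * ?g j"
    if j: "j < m" for j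
  proof -
    have "(\<Sum>b<m. (cmod (?u j b))\<^sup>2) + (\<Sum>b<m. (cmod (?v j b))\<^sup>2) \<le> 2"
      using unitary_block_row_norm_le[OF U _ idx(2)] unitary_block_row_norm_le[OF U _ idx(4)]
        mult_add_less_mult[OF idx(1) j] mult_add_less_mult[OF idx(3) j] by fastforce
    moreover have "0 \<le> cmod r * ?e * ?g j" using gibbs_weight_nonneg[of \<beta> m d j] by simp
    ultimately have "(cmod r * ?e * ?g j) * ((\<Sum>b<m. (cmod (?u j b))\<^sup>2) + (\<Sum>b<m. (cmod (?v j b))\<^sup>2))
        \<le> (cmod r * ?e * ?g j) * 2"
      by (intro mult_left_mono)
    then show ?thesis
      by (simp add: sum_distrib_left sum_divide_distrib[symmetric] sum.distrib distrib_left mult.assoc)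
  qed
  have "cmod (\<Sum>j<m. \<Sum>b<m. ?u j b * r * complex_of_real (?g b) * cnj (?v j b))
      \<le> (\<Sum>j<m. \<Sum>b<m. cmod (?u j b * r * complex_of_real (?g b) * cnj (?v j b)))"
    by (rule order_trans[OF norm_sum sum_mono[OF norm_sum]])
  also have "\<dots> \<le> (\<Sum>j<m. \<Sum>b<m. cmod r * ?e * ?g j * ((cmod (?u j b))\<^sup>2 + (cmod (?v j b))\<^sup>2) / 2)"
    using transition_term_bound[OF energy idx(1,2) _ _ gap] by (intro sum_mono) auto
  also have "\<dots> \<le> (\<Sum>j<m. cmod r * ?e * ?g j)"
    using row by (intro sum_mono) auto
  also have "\<dots> = ?e * cmod r"
    using sum_gibbs_weight[OF m] by (simp add: sum_distrib_left[symmetric])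
  finally show ?thesis .
qed

theorem mainTheorem17:
  fixes \<beta> E0 E1 E2 \<Delta>E :: real and \<rho> :: "complex mat"
    and T :: "complex mat \<Rightarrow> complex mat"
  assumes "\<beta> > 0"
    and "\<Delta>E > 0" and "E1 - E0 = \<Delta>E" and "E2 - E1 = \<Delta>E"
    and "density_mat 3 \<rho>"
    and "\<rho> $$ (1,2) = 0"
    and "thermal_operation \<beta> 3
           (mat_diag 3 (\<lambda>i. complex_of_real ([E0, E1, E2] ! i))) T"
  shows "cmod (T \<rho> $$ (1,2)) \<le> exp (- \<beta> * \<Delta>E) * cmod (\<rho> $$ (0,1))"
proof -
  let ?Es = "\<lambda>i. [E0, E1, E2] ! i"
  obtain m U d where m: "0 < m" and U: "unitary_mat (3 * m) U"
    and energy: "\<And>x y. x < 3 * m \<Longrightarrow> y < 3 * m \<Longrightarrow> U $$ (x,y) \<noteq> 0 \<Longrightarrow>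
       ?Es (x div m) + d (x mod m) = ?Es (y div m) + d (y mod m)"
    and T: "\<And>\<rho>. \<rho> \<in> carrier_mat 3 3 \<Longrightarrow>
       T \<rho> = ptrace2 m (U * kron \<rho> (mat_diag m (\<lambda>b. complex_of_real (gibbs_weight \<beta> m d b))) * mat_adjoint U)"
    using thermal_operation_eigenbasis[OF assms(7)] by blast
  have \<rho>: "\<rho> \<in> carrier_mat 3 3" using assms(5) unfolding density_mat_def hermitian_mat_def by auto
  define F where "F j a a' b = U $$ (1 * m + j, a * m + b) * \<rho> $$ (a,a')
    * complex_of_real (gibbs_weight \<beta> m d b) * cnj (U $$ (2 * m + j, a' * m + b))" for j a a' b
  have selection: "F j a a' b = 0" if "j < m" "a < 3" "a' < 3" "b < m" "(a,a') \<noteq> (0,1)" for j a a' b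
  proof (rule ccontr)
    assume "F j a a' b \<noteq> 0"
    then have "?Es 1 + d j = ?Es a + d b" "?Es 2 + d j = ?Es a' + d b" "(a,a') \<noteq> (1,2)"
      using block_energy_conservation[of 3 m U ?Es d 1 a j b, OF energy]
        block_energy_conservation[of 3 m U ?Es d 2 a' j b, OF energy] that assms(6)
      unfolding F_def by auto
    then show False using that assms(2-4) by (auto simp: less_Suc_eq numeral_3_eq_3)
  qed
  have "T \<rho> $$ (1,2) = (\<Sum>j<m. \<Sum>a<3. \<Sum>a'<3. \<Sum>b<m. F j a a' b)"
    unfolding T[OF \<rho>] F_def using unitary_matD(1)[OF U] \<rho> m
    by (simp add: index_ptrace2_conj_kron_mat_diag)
  also have "\<dots> = (\<Sum>j<m. \<Sum>b<m. F j 0 1 b)"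
    using selection by (simp add: numeral_3_eq_3 lessThan_Suc)
  finally show ?thesis
    using coherence_transfer_bound[where Es = ?Es and d = d, OF U m energy, of 1 0 2 1 \<Delta>E "\<rho> $$ (0,1)" \<beta>] assms(3)
    unfolding F_def by (simp add: mult_ac)
qed

end
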